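(* Every $E$-linear code $C$ of length $2n$ is two-sided symplectic nice, i.e. $|C|\,|C^{\perp_S}|=|E|^{2n}$.
   Context: $E=\langle \kappa,\tau \mid 2\kappa=2\tau=0,\ \kappa^2=\kappa,\ \tau^2=\tau,\ \kappa\tau=\kappa,\ \tau\kappa=\tau\rangle$ is the non-unital ring $\{0,\kappa,\tau,\zeta\}$ ($|E|=4$), $\zeta=\kappa+\tau$, with $e\kappa=e\tau=e$, $e\zeta=0$ for all $e\in E$. An $E$-linear code of length $2n$ is a left $E$-submodule $C\subseteq E^{2n}$. Symplectic inner product: for $x=(u|v),y=(u'|v')\in E^{2n}$, $\langle x,y\rangle_s=\sum_i u_iv'_i+\sum_i v_iu'_i$. $C^{\perp_S}=\{z\in E^{2n}:\langle z,w\rangle_s=0\text{ and }\langle w,z\rangle_s=0\ \forall w\in C\}$. *)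

theory Defs
  imports Main
begin

text \<open>The non-unital ring E = {0, kappa, tau, zeta}, zeta = kappa + tau, of characteristic 2,
  with e * kappa = e * tau = e and e * zeta = 0.\<close>

datatype E = E0 | Ek | Et | Ez

fun E_add :: "E \<Rightarrow> E \<Rightarrow> E" where
  "E_add E0 y = y"
| "E_add x E0 = x"
| "E_add Ek Ek = E0"
| "E_add Ek Et = Ez"
| "E_add Ek Ez = Et"
| "E_add Et Ek = Ez"
| "E_add Et Et = E0"
| "E_add Et Ez = Ek"
| "E_add Ez Ek = Et"
| "E_add Ez Et = Ek"
| "E_add Ez Ez = E0"

fun E_mul :: "E \<Rightarrow> E \<Rightarrow> E" where
  "E_mul x Ek = x"
| "E_mul x Et = x"
| "E_mul x E0 = E0"
| "E_mul x Ez = E0"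

lemma E_UNIV: "(UNIV :: E set) = {E0, Ek, Et, Ez}"
  using E.exhaust by blast

instance E :: finite
  by standard (simp add: E_UNIV)

instantiation E :: comm_monoid_add
begin
definition zero_E_def: "0 = E0"
definition plus_E_def: "x + y = E_add x y"
instance
proof
  fix a b c :: E
  show "a + b + c = a + (b + c)" unfolding plus_E_def
    by (cases a; cases b; cases c) auto
  show "a + b = b + a" unfolding plus_E_def
    by (cases a; cases b) auto
  show "0 + a = a" unfolding plus_E_def zero_E_def by simp
qed
end

instantiation E :: times
begin
definition times_E_def: "x * y = E_mul x y"
instance ..
end

lemma E_relations:
  "Ek + Ek = 0" "Et + Et = 0" "Ek * Ek = Ek" "Et * Et = Et" "Ek * Et = Ek" "Et * Ek = Et"
  "Ez = Ek + Et" "\<And>e::E. e * Ek = e" "\<And>e::E. e * Et = e" "\<And>e::E. e * Ez = 0"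
  by (auto simp: plus_E_def times_E_def zero_E_def)

text \<open>Vectors of E^{2n}: functions nat \<Rightarrow> E vanishing at indices \<ge> 2n.
  A vector x = (u|v) has u_i = x i and v_i = x (n+i) for i < n.\<close>

definition Evec :: "nat \<Rightarrow> (nat \<Rightarrow> E) set" where
  "Evec n = {x. \<forall>i\<ge>2*n. x i = 0}"

definition smult_E :: "E \<Rightarrow> (nat \<Rightarrow> E) \<Rightarrow> (nat \<Rightarrow> E)" where
  "smult_E e x = (\<lambda>i. e * x i)"

definition vadd_E :: "(nat \<Rightarrow> E) \<Rightarrow> (nat \<Rightarrow> E) \<Rightarrow> (nat \<Rightarrow> E)" where
  "vadd_E x y = (\<lambda>i. x i + y i)"

definition E_linear_code :: "nat \<Rightarrow> (nat \<Rightarrow> E) set \<Rightarrow> bool" where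
  "E_linear_code n C \<longleftrightarrow> C \<subseteq> Evec n \<and> (\<lambda>i. 0) \<in> C
     \<and> (\<forall>x\<in>C. \<forall>y\<in>C. vadd_E x y \<in> C)
     \<and> (\<forall>e. \<forall>x\<in>C. smult_E e x \<in> C)"

definition symp_E :: "nat \<Rightarrow> (nat \<Rightarrow> E) \<Rightarrow> (nat \<Rightarrow> E) \<Rightarrow> E" where
  "symp_E n x y = (\<Sum>i<n. x i * y (n + i)) + (\<Sum>i<n. x (n + i) * y i)"

definition symp_dual :: "nat \<Rightarrow> (nat \<Rightarrow> E) set \<Rightarrow> (nat \<Rightarrow> E) set" where
  "symp_dual n C = {z \<in> Evec n. \<forall>w\<in>C. symp_E n z w = 0 \<and> symp_E n w z = 0}"

end

theory Submission
  imports Defs "HOL-Library.FuncSet" "HOL-Library.Function_Algebras" "HOL-Library.Z2"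
begin

(*
  As an additive group E is F_2^2 with basis kappa, zeta, and right multiplication by f is the
  identity or zero according to the kappa-coefficient of f. The F_2-valued form
  b(z,w) = zeta-coefficient of <z,w>_s + <w,z>_s is biadditive and nondegenerate on E^{2n}.
  For a left submodule C, testing b(z,-) on w, kappa w and zeta w recovers both coefficients of
  <z,w>_s and of <w,z>_s, so C^{perp_S} is exactly the b-annihilator of C. Counting the pairs
  (v,s) in E^{2n} x C with b(v,s) = 0 by rows and by columns, using that a nonzero additive map
  to F_2 vanishes on exactly half of a finite group of exponent 2, gives |C| |C^{perp_S}| = |E^{2n}|.
*)

lemma card_kernel_additive_bit:
  fixes C :: "'a::comm_monoid_add set" and f :: "'a \<Rightarrow> bit"
  assumes "finite C"
    and add_closed: "\<And>x y. x \<in> C \<Longrightarrow> y \<in> C \<Longrightarrow> x + y \<in> C"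
    and add_self: "\<And>x. x \<in> C \<Longrightarrow> x + x = 0"
    and additive: "\<And>x y. x \<in> C \<Longrightarrow> y \<in> C \<Longrightarrow> f (x + y) = f x + f y"
  shows "2 * card {x\<in>C. f x = 0} = card C + (if \<forall>x\<in>C. f x = 0 then card C else 0)"
proof (cases "\<forall>x\<in>C. f x = 0")
  case True
  then have "{x\<in>C. f x = 0} = C" by blast
  with True show ?thesis by simp
next
  case False
  then obtain p where p: "p \<in> C" "f p = 1" by auto
  have "bij_betw (\<lambda>x. x + p) {x\<in>C. f x = 0} {x\<in>C. f x = 1}"
    by (rule bij_betw_byWitness[where f' = "\<lambda>x. x + p"])
      (auto simp: add_closed additive p add_self add.assoc)
  then have "card {x\<in>C. f x = 0} = card {x\<in>C. f x = 1}"
    by (rule bij_betw_same_card)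
  moreover have "card C = card {x\<in>C. f x = 0} + card {x\<in>C. f x = 1}"
    using \<open>finite C\<close> by (subst card_Un_disjoint[symmetric]) (auto intro: arg_cong[where f = card])
  ultimately show ?thesis
    unfolding if_not_P[OF False] by simp
qed

lemma card_mult_card_annihilator:
  fixes G C :: "'a::comm_monoid_add set" and b :: "'a \<Rightarrow> 'a \<Rightarrow> bit"
  assumes "finite G" and "C \<subseteq> G" and "0 \<in> C"
    and C_add: "\<And>x y. x \<in> C \<Longrightarrow> y \<in> C \<Longrightarrow> x + y \<in> C"
    and G_add: "\<And>x y. x \<in> G \<Longrightarrow> y \<in> G \<Longrightarrow> x + y \<in> G"
    and add_self: "\<And>x. x \<in> G \<Longrightarrow> x + x = 0"
    and additive_left: "\<And>x y w. x \<in> G \<Longrightarrow> y \<in> G \<Longrightarrow> w \<in> G \<Longrightarrow> b (x + y) w = b x w + b y w"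
    and additive_right: "\<And>v x y. v \<in> G \<Longrightarrow> x \<in> G \<Longrightarrow> y \<in> G \<Longrightarrow> b v (x + y) = b v x + b v y"
    and nondegenerate: "\<And>s. s \<in> G \<Longrightarrow> s \<noteq> 0 \<Longrightarrow> \<exists>v\<in>G. b v s \<noteq> 0"
  shows "card C * card {v\<in>G. \<forall>s\<in>C. b v s = 0} = card G"
proof -
  define A where "A = {v\<in>G. \<forall>s\<in>C. b v s = 0}"
  have "finite C"
    using \<open>finite G\<close> \<open>C \<subseteq> G\<close> by (rule finite_subset[rotated])
  have "0 \<in> G"
    using \<open>0 \<in> C\<close> \<open>C \<subseteq> G\<close> by blast
  have row: "2 * card {s\<in>C. b v s = 0} = card C + (if v \<in> A then card C else 0)"
    if "v \<in> G" for v
    using card_kernel_additive_bit[of C "b v"] \<open>finite C\<close> \<open>C \<subseteq> G\<close> that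
    by (auto simp: A_def C_add add_self additive_right subset_iff)
  have annihilates_iff_zero: "(\<forall>v\<in>G. b v s = 0) \<longleftrightarrow> s = 0" if "s \<in> G" for s
  proof
    show "s = 0" if "\<forall>v\<in>G. b v s = 0"
      using nondegenerate \<open>s \<in> G\<close> that by blast
    have "b v 0 = 0" if "v \<in> G" for v
      using additive_right[OF that \<open>0 \<in> G\<close> \<open>0 \<in> G\<close>] by simp
    then show "\<forall>v\<in>G. b v s = 0" if "s = 0"
      using that by blast
  qed
  have col: "2 * card {v\<in>G. b v s = 0} = card G + (if s = 0 then card G else 0)"
    if "s \<in> C" for s
    using card_kernel_additive_bit[of G "\<lambda>v. b v s"] annihilates_iff_zero[of s] \<open>finite G\<close>
      \<open>C \<subseteq> G\<close> that by (auto simp: G_add add_self additive_left)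
  have "2 * (\<Sum>v\<in>G. card {s\<in>C. b v s = 0}) = card G * card C + card A * card C"
  proof -
    have "2 * (\<Sum>v\<in>G. card {s\<in>C. b v s = 0}) = (\<Sum>v\<in>G. card C + (if v \<in> A then card C else 0))"
      by (simp add: sum_distrib_left row)
    also have "\<dots> = card G * card C + (\<Sum>v\<in>A. card C)"
      using \<open>finite G\<close> by (simp add: sum.distrib sum.inter_filter[symmetric] A_def)
    finally show ?thesis by simp
  qed
  moreover have "2 * (\<Sum>s\<in>C. card {v\<in>G. b v s = 0}) = card C * card G + card G"
  proof -
    have "2 * (\<Sum>s\<in>C. card {v\<in>G. b v s = 0}) = (\<Sum>s\<in>C. card G + (if s = 0 then card G else 0))"
      by (simp add: sum_distrib_left col)
    also have "\<dots> = card C * card G + card G"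
      using \<open>finite C\<close> \<open>0 \<in> C\<close> by (simp add: sum.distrib)
    finally show ?thesis .
  qed
  moreover have "(\<Sum>v\<in>G. card {s\<in>C. b v s = 0}) = (\<Sum>s\<in>C. card {v\<in>G. b v s = 0})"
  proof -
    have "(\<Sum>v\<in>G. card {s\<in>C. b v s = 0}) = (\<Sum>v\<in>G. \<Sum>s\<in>C. if b v s = 0 then 1 else 0)"
      using \<open>finite C\<close> by (simp add: sum.inter_filter[symmetric])
    also have "\<dots> = (\<Sum>s\<in>C. \<Sum>v\<in>G. if b v s = 0 then 1 else 0)"
      by (rule sum.swap)
    also have "\<dots> = (\<Sum>s\<in>C. card {v\<in>G. b v s = 0})"
      using \<open>finite G\<close> by (simp add: sum.inter_filter[symmetric])
    finally show ?thesis .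
  qed
  ultimately show ?thesis
    unfolding A_def by (simp add: mult.commute)
qed

text \<open>Every e is kappa_coeff e \<cdot> kappa + zeta_coeff e \<cdot> zeta, as tau = kappa + zeta.\<close>

definition kappa_coeff :: "E \<Rightarrow> bit" where
  "kappa_coeff e = (if e = Ek \<or> e = Et then 1 else 0)"

definition zeta_coeff :: "E \<Rightarrow> bit" where
  "zeta_coeff e = (if e = Ez \<or> e = Et then 1 else 0)"

lemma E_coeffs [simp]:
  "kappa_coeff 0 = 0" "kappa_coeff Ek = 1" "kappa_coeff Ez = 0"
  "zeta_coeff 0 = 0" "zeta_coeff Ek = 0" "zeta_coeff Ez = 1"
  by (simp_all add: kappa_coeff_def zeta_coeff_def zero_E_def)

lemma E_add_self [simp]: "x + x = (0::E)"
  by (cases x) (auto simp: plus_E_def zero_E_def)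

lemma E_mult_zero [simp]:
  fixes x :: E
  shows "0 * x = 0" and "x * 0 = 0"
  by (cases x; simp add: times_E_def zero_E_def)+

lemma E_distrib:
  fixes x y z :: E
  shows "x * (y + z) = x * y + x * z" and "(x + y) * z = x * z + y * z"
  by (cases x; cases y; cases z; simp add: times_E_def plus_E_def zero_E_def)+

lemma E_mult_mult_Ek_Ez:
  fixes x y :: E
  shows "x * (Ek * y) = x * y" and "x * (Ez * y) = 0"
  by (cases x; cases y; simp add: times_E_def zero_E_def)+

lemma kappa_coeff_add: "kappa_coeff (x + y) = kappa_coeff x + kappa_coeff y"
  and zeta_coeff_add: "zeta_coeff (x + y) = zeta_coeff x + zeta_coeff y"
  by (cases x; cases y; simp add: kappa_coeff_def zeta_coeff_def plus_E_def zero_E_def)+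

lemma kappa_coeff_sum: "kappa_coeff (\<Sum>i\<in>A. f i) = (\<Sum>i\<in>A. kappa_coeff (f i))"
  using sum_comp_morphism[of kappa_coeff, OF _ kappa_coeff_add, of f A]
  by (simp add: kappa_coeff_def zero_E_def comp_def)

lemma E_mult_sum: "e * (\<Sum>i\<in>A. f i) = (\<Sum>i\<in>A. e * f i :: E)"
  using sum_comp_morphism[of "(*) e", OF _ E_distrib(1), of f A] by (simp add: comp_def)

lemma kappa_coeff_mult: "kappa_coeff (x * y) = kappa_coeff x * kappa_coeff y"
  by (cases x; cases y; simp add: kappa_coeff_def times_E_def)

lemma zeta_coeff_mult: "zeta_coeff (x * y) = zeta_coeff x * kappa_coeff y"
  by (cases x; cases y; simp add: kappa_coeff_def zeta_coeff_def times_E_def)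

lemma E_eq_0_iff: "x = 0 \<longleftrightarrow> kappa_coeff x = 0 \<and> zeta_coeff x = 0"
  by (cases x) (simp_all add: kappa_coeff_def zeta_coeff_def zero_E_def)

lemma E_commutator_nondegenerate:
  assumes "y \<noteq> 0"
  shows "\<exists>x. zeta_coeff (x * y + y * x) \<noteq> 0"
proof (cases y)
  case Ek
  then show ?thesis
    by (intro exI[of _ Ez]) (simp add: zeta_coeff_def times_E_def plus_E_def)
next
  case Et
  then show ?thesis
    by (intro exI[of _ Ez]) (simp add: zeta_coeff_def times_E_def plus_E_def)
next
  case Ez
  then show ?thesis
    by (intro exI[of _ Ek]) (simp add: zeta_coeff_def times_E_def plus_E_def)
qed (use assms zero_E_def in simp)

lemma E_mult_assoc: "x * y * z = x * (y * z :: E)"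
  by (cases y; cases z; simp add: times_E_def)

lemma symp_E_add_left: "symp_E n (x + y) w = symp_E n x w + symp_E n y w"
  unfolding symp_E_def plus_fun_apply E_distrib sum.distrib by (simp only: ac_simps)

lemma symp_E_add_right: "symp_E n w (x + y) = symp_E n w x + symp_E n w y"
  unfolding symp_E_def plus_fun_apply E_distrib sum.distrib by (simp only: ac_simps)

lemma symp_E_smult_left: "symp_E n (smult_E e w) z = e * symp_E n w z"
  by (simp add: symp_E_def smult_E_def E_distrib E_mult_sum E_mult_assoc)

lemma symp_E_smult_Ek_right: "symp_E n z (smult_E Ek w) = symp_E n z w"
  by (simp add: symp_E_def smult_E_def E_mult_mult_Ek_Ez)

lemma symp_E_smult_Ez_right: "symp_E n z (smult_E Ez w) = 0"
  by (simp add: symp_E_def smult_E_def E_mult_mult_Ek_Ez)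

lemma kappa_coeff_symp_E_commute: "kappa_coeff (symp_E n z w) = kappa_coeff (symp_E n w z)"
  by (simp only: symp_E_def kappa_coeff_add kappa_coeff_sum kappa_coeff_mult ac_simps)

definition symp_pairing :: "nat \<Rightarrow> (nat \<Rightarrow> E) \<Rightarrow> (nat \<Rightarrow> E) \<Rightarrow> bit" where
  "symp_pairing n z w = zeta_coeff (symp_E n z w + symp_E n w z)"

lemma symp_pairing_add_left: "symp_pairing n (x + y) w = symp_pairing n x w + symp_pairing n y w"
  unfolding symp_pairing_def symp_E_add_left symp_E_add_right zeta_coeff_add by (simp only: ac_simps)

lemma symp_pairing_add_right: "symp_pairing n w (x + y) = symp_pairing n w x + symp_pairing n w y"
  unfolding symp_pairing_def symp_E_add_left symp_E_add_right zeta_coeff_add by (simp only: ac_simps)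

lemma symp_pairing_single:
  assumes "i < n"
  shows "symp_pairing n (\<lambda>k. if k = i then x else 0) y = zeta_coeff (x * y (n + i) + y (n + i) * x)"
    and "symp_pairing n (\<lambda>k. if k = n + i then x else 0) y = zeta_coeff (x * y i + y i * x)"
  using assms by (simp_all add: symp_pairing_def symp_E_def if_distrib[where f = "\<lambda>u. u * _"]
      if_distrib[where f = "\<lambda>u. _ * u"] cong: if_cong)

lemma symp_pairing_nondegenerate:
  assumes "s \<in> Evec n" and "s \<noteq> 0"
  shows "\<exists>v\<in>Evec n. symp_pairing n v s \<noteq> 0"
proof -
  obtain j where "s j \<noteq> 0"
    using \<open>s \<noteq> 0\<close> by (auto simp: fun_eq_iff)
  with \<open>s \<in> Evec n\<close> have "j < 2 * n"
    by (auto simp: Evec_def not_less[symmetric])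
  obtain x where x: "zeta_coeff (x * s j + s j * x) \<noteq> 0"
    using E_commutator_nondegenerate[OF \<open>s j \<noteq> 0\<close>] by blast
  show ?thesis
  proof (cases "j < n")
    case True
    let ?v = "\<lambda>k. if k = n + j then x else 0"
    have "?v \<in> Evec n" and "symp_pairing n ?v s \<noteq> 0"
      using True x by (simp_all add: Evec_def symp_pairing_single(2))
    then show ?thesis by blast
  next
    case False
    let ?v = "\<lambda>k. if k = j - n then x else 0"
    have "?v \<in> Evec n" and "symp_pairing n ?v s \<noteq> 0"
      using False \<open>j < 2 * n\<close> x symp_pairing_single(1)[of "j - n" n x s]
      by (auto simp: Evec_def)
    then show ?thesis by blast
  qed
qed

lemma symp_orthogonal_iff_symp_pairing:
  "symp_E n z w = 0 \<and> symp_E n w z = 0 \<longleftrightarrow>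
     symp_pairing n z w = 0 \<and> symp_pairing n z (smult_E Ek w) = 0 \<and> symp_pairing n z (smult_E Ez w) = 0"
proof -
  have "symp_pairing n z (smult_E Ek w) = zeta_coeff (symp_E n z w)"
    by (simp add: symp_pairing_def symp_E_smult_left symp_E_smult_Ek_right zeta_coeff_add
        zeta_coeff_mult)
  moreover have "symp_pairing n z (smult_E Ez w) = kappa_coeff (symp_E n w z)"
    by (simp add: symp_pairing_def symp_E_smult_left symp_E_smult_Ez_right zeta_coeff_mult)
  moreover have "symp_pairing n z w = zeta_coeff (symp_E n z w) + zeta_coeff (symp_E n w z)"
    by (simp add: symp_pairing_def zeta_coeff_add)
  ultimately show ?thesis
    unfolding E_eq_0_iff[of "symp_E n z w"] E_eq_0_iff[of "symp_E n w z"]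
      kappa_coeff_symp_E_commute[of n z w] by auto
qed

lemma symp_dual_eq_annihilator:
  assumes "E_linear_code n C"
  shows "symp_dual n C = {z \<in> Evec n. \<forall>w\<in>C. symp_pairing n z w = 0}"
  using assms unfolding symp_dual_def E_linear_code_def symp_orthogonal_iff_symp_pairing by blast

lemma card_Evec: "card (Evec n) = card (UNIV :: E set) ^ (2 * n)"
proof -
  have "bij_betw (\<lambda>x. restrict x {..<2 * n}) (Evec n) (PiE {..<2 * n} (\<lambda>_. UNIV :: E set))"
    by (rule bij_betwI[where g = "\<lambda>f i. if i < 2 * n then f i else 0"])
      (auto simp: Evec_def PiE_def extensional_def fun_eq_iff)
  then have "card (Evec n) = card (PiE {..<2 * n} (\<lambda>_. UNIV :: E set))"
    by (rule bij_betw_same_card)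
  then show ?thesis
    by (simp add: card_PiE)
qed

lemma finite_Evec: "finite (Evec n)"
  by (rule card_ge_0_finite) (simp add: card_Evec finite_UNIV_card_ge_0)

theorem mainTheorem13:
  assumes "E_linear_code n C"
  shows "card C * card (symp_dual n C) = card (UNIV :: E set) ^ (2 * n)"
proof -
  have "card C * card {z \<in> Evec n. \<forall>w\<in>C. symp_pairing n z w = 0} = card (Evec n)"
  proof (rule card_mult_card_annihilator)
    show "C \<subseteq> Evec n" and "0 \<in> C" and "\<And>x y. x \<in> C \<Longrightarrow> y \<in> C \<Longrightarrow> x + y \<in> C"
      using assms by (auto simp: E_linear_code_def zero_fun_def vadd_E_def plus_fun_def)
    show "\<And>x y. x \<in> Evec n \<Longrightarrow> y \<in> Evec n \<Longrightarrow> x + y \<in> Evec n"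
      and "\<And>x. x \<in> Evec n \<Longrightarrow> x + x = 0"
      by (auto simp: Evec_def fun_eq_iff)
    show "\<And>s. s \<in> Evec n \<Longrightarrow> s \<noteq> 0 \<Longrightarrow> \<exists>v\<in>Evec n. symp_pairing n v s \<noteq> 0"
      by (rule symp_pairing_nondegenerate)
  qed (simp_all add: finite_Evec symp_pairing_add_left symp_pairing_add_right)
  then show ?thesis
    by (simp add: symp_dual_eq_annihilator[OF assms] card_Evec)
qed

end
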